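(* Let $G$ be a bipartite graph with bipartition $(X,Y)$, $|X| = n\geq 2$, $|Y|=m$, every $x\in X$ having degree at least $\delta$. Let $(C,x)$ be a tight pair in $G$, with $C = y_1x_1y_2x_2\ldots y_\ell x_\ell y_1$ where $x_i \in X$, $y_i\in Y$. If $y_i \in N(x)$ for some $i$, then $N(x_i) \setminus V(C)$ and $N(x)\setminus V(C)$ are disjoint.
   Context: A tight pair in $G$ is a pair $(C,x)$ where $C$ is a longest cycle in $G$ and $x \in X \setminus V(C)$, chosen such that $|N(x)\cap V(C)|$ is maximum over all pairs $(C',x')$ with $C'$ a longest cycle in $G$ and $x' \in X\setminus V(C')$. ($G$ has a tight pair iff it has no cycle of length $2n$.) *)

theory Defs
  imports Main
begin

definition nbhd :: "('a \<Rightarrow> 'a \<Rightarrow> bool) \<Rightarrow> 'a \<Rightarrow> 'a set" where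
  "nbhd E v = {u. E v u}"

definition bipartite_graph :: "'a set \<Rightarrow> 'a set \<Rightarrow> ('a \<Rightarrow> 'a \<Rightarrow> bool) \<Rightarrow> bool" where
  "bipartite_graph X Y E \<longleftrightarrow> finite X \<and> finite Y \<and> X \<inter> Y = {} \<and>
     (\<forall>u v. E u v \<longleftrightarrow> E v u) \<and>
     (\<forall>u v. E u v \<longrightarrow> (u \<in> X \<and> v \<in> Y) \<or> (u \<in> Y \<and> v \<in> X))"

definition is_cycle :: "('a \<Rightarrow> 'a \<Rightarrow> bool) \<Rightarrow> 'a list \<Rightarrow> bool" where
  "is_cycle E c \<longleftrightarrow> length c \<ge> 3 \<and> distinct c \<and>
     (\<forall>i < length c. E (c ! i) (c ! ((i + 1) mod length c)))"

definition longest_cycle :: "('a \<Rightarrow> 'a \<Rightarrow> bool) \<Rightarrow> 'a list \<Rightarrow> bool" where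
  "longest_cycle E c \<longleftrightarrow> is_cycle E c \<and> (\<forall>c'. is_cycle E c' \<longrightarrow> length c' \<le> length c)"

definition tight_pair :: "'a set \<Rightarrow> ('a \<Rightarrow> 'a \<Rightarrow> bool) \<Rightarrow> 'a list \<Rightarrow> 'a \<Rightarrow> bool" where
  "tight_pair X E c x \<longleftrightarrow> longest_cycle E c \<and> x \<in> X - set c \<and>
     (\<forall>c' x'. longest_cycle E c' \<and> x' \<in> X - set c' \<longrightarrow>
        card (nbhd E x' \<inter> set c') \<le> card (nbhd E x \<inter> set c))"

end

theory Submission
  imports Defs
begin

text \<open>If \<open>y\<^sub>i \<in> N(x)\<close> and some \<open>y \<notin> V(C)\<close> were adjacent to both \<open>x\<^sub>i\<close> and \<open>x\<close>, then
  replacing the edge \<open>y\<^sub>i x\<^sub>i\<close> of \<open>C\<close> by the path \<open>y\<^sub>i x y x\<^sub>i\<close> would give a cycle longer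
  than the longest cycle \<open>C\<close>.\<close>

lemma is_cycle_iff_successively:
  "is_cycle E c \<longleftrightarrow> 3 \<le> length c \<and> distinct c \<and> successively E c \<and> E (last c) (hd c)"
proof (cases "c = []")
  case False
  have "(\<forall>i < length c. E (c ! i) (c ! ((i + 1) mod length c))) \<longleftrightarrow>
      (\<forall>i. Suc i < length c \<longrightarrow> E (c ! i) (c ! Suc i)) \<and> E (c ! (length c - 1)) (c ! 0)"
  proof (intro iffI conjI allI impI)
    fix i assume A: "\<forall>i < length c. E (c ! i) (c ! ((i + 1) mod length c))" and i: "Suc i < length c"
    have "E (c ! i) (c ! ((i + 1) mod length c))" using A Suc_lessD[OF i] by blast
    then show "E (c ! i) (c ! Suc i)" using i by simp
  next
    assume A: "\<forall>i < length c. E (c ! i) (c ! ((i + 1) mod length c))"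
    have "length c - 1 < length c" using False by simp
    then have "E (c ! (length c - 1)) (c ! ((length c - 1 + 1) mod length c))"
      using A by blast
    then show "E (c ! (length c - 1)) (c ! 0)"
      using False by simp
  next
    fix i assume A: "(\<forall>i. Suc i < length c \<longrightarrow> E (c ! i) (c ! Suc i)) \<and> E (c ! (length c - 1)) (c ! 0)"
      and i: "i < length c"
    show "E (c ! i) (c ! ((i + 1) mod length c))"
    proof (cases "Suc i < length c")
      case True
      then show ?thesis using A by simp
    next
      case False
      then have "i + 1 = length c" using i by simp
      then show ?thesis using A by (simp flip: \<open>i + 1 = length c\<close>)
    qed
  qed
  with False show ?thesis
    unfolding is_cycle_def by (simp add: successively_conv_nth last_conv_nth hd_conv_nth)
qed (simp add: is_cycle_def)

lemma is_cycle_insert_path: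
  assumes "is_cycle E (xs @ ys)" and "xs \<noteq> []" "ys \<noteq> []" "ps \<noteq> []"
    and "distinct ps" "successively E ps" "set ps \<inter> set (xs @ ys) = {}"
    and "E (last xs) (hd ps)" "E (last ps) (hd ys)"
  shows "is_cycle E (xs @ ps @ ys)"
proof -
  have "last (xs @ ps @ ys) = last (xs @ ys)" "hd (xs @ ps @ ys) = hd (xs @ ys)"
    using \<open>xs \<noteq> []\<close> \<open>ys \<noteq> []\<close> by simp_all
  with assms show ?thesis
    by (auto simp: is_cycle_iff_successively successively_append_iff)
qed

lemma longest_cycle_no_detour:
  assumes longest: "longest_cycle E c" and p: "0 < p" "p < length c"
    and "ps \<noteq> []" "distinct ps" "successively E ps" "set ps \<inter> set c = {}"
    and "E (c ! (p - 1)) (hd ps)" "E (last ps) (c ! p)"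
  shows False
proof -
  define xs ys where "xs = take p c" and "ys = drop p c"
  have split: "xs @ ys = c" by (simp add: xs_def ys_def)
  have "xs \<noteq> []" "ys \<noteq> []" "hd ys = c ! p" "last xs = c ! (p - 1)"
    using p by (auto simp: xs_def ys_def hd_drop_conv_nth) (cases p; simp add: take_Suc_conv_app_nth)
  with assms split have "is_cycle E (xs @ ps @ ys)"
    by (intro is_cycle_insert_path) (auto simp: longest_cycle_def)
  then have "length (xs @ ps @ ys) \<le> length c"
    using longest unfolding longest_cycle_def by blast
  moreover have "length (xs @ ps @ ys) > length c"
    using \<open>ps \<noteq> []\<close> by (simp flip: split)
  ultimately show False by simp
qed

theorem claim1:
  fixes X Y :: "'a set" and E :: "'a \<Rightarrow> 'a \<Rightarrow> bool"
    and n m \<delta> l i :: nat and c :: "'a list" and x :: 'a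
  assumes "bipartite_graph X Y E"
    and "card X = n" and "n \<ge> 2" and "card Y = m"
    and "\<forall>v \<in> X. card (nbhd E v) \<ge> \<delta>"
    and "tight_pair X E c x"
    and "length c = 2 * l"
    and "\<forall>j < l. c ! (2 * j) \<in> Y \<and> c ! (2 * j + 1) \<in> X"
    and "i < l" and "c ! (2 * i) \<in> nbhd E x"
  shows "(nbhd E (c ! (2 * i + 1)) - set c) \<inter> (nbhd E x - set c) = {}"
proof (rule ccontr)
  assume "\<not> ?thesis"
  then obtain y where y: "E (c ! (2 * i + 1)) y" "E x y" "y \<notin> set c"
    unfolding nbhd_def by blast
  have sym: "E u v \<longleftrightarrow> E v u" for u v
    using assms(1) unfolding bipartite_graph_def by blast
  have "x \<noteq> y"
    using y(2) assms(1) unfolding bipartite_graph_def by blast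
  have "longest_cycle E c" "x \<notin> set c"
    using assms(6) unfolding tight_pair_def by blast+
  show False
    by (rule longest_cycle_no_detour[where E = E and c = c and p = "2 * i + 1" and ps = "[x, y]"])
      (use assms(7,9,10) y sym \<open>x \<noteq> y\<close> \<open>longest_cycle E c\<close> \<open>x \<notin> set c\<close>
        in \<open>auto simp: nbhd_def\<close>)
qed

end
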